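(* Let $\mathbb{X},\mathbb{Y}$ be $n$-dimensional real polyhedral Banach spaces with $|\mathrm{Ext}\,B_{\mathbb{X}^*}|=|\mathrm{Ext}\,B_{\mathbb{Y}^*}|$, and let $T\in\mathbb{L}(\mathbb{X},\mathbb{Y})$ be a bijective operator that preserves parallel pairs (equivalently, TEA pairs). Then: (i) for each $f\in\mathrm{Ext}\,B_{\mathbb{X}^*}$ there exists a unique $g\in\mathrm{Ext}\,B_{\mathbb{Y}^*}$ such that $T(\mathrm{Sm}(f))=\mathrm{Sm}(g)$; (ii) for each non-zero $x\in\mathbb{X}$, $|\mathrm{Ext}\,J(x)|=|\mathrm{Ext}\,J(Tx)|$.
   Context: A finite-dimensional Banach space is polyhedral if its unit ball has finitely many extreme points. For non-zero $x$, $J(x)=\{f\in S_{\mathbb{X}^*}: f(x)=\|x\|\}$ and $\mathrm{Ext}\,J(x)$ denotes its set of extreme points. For $f\in\mathrm{Ext}\,B_{\mathbb{X}^*}$, $\mathrm{Sm}(f)=\{x\in\mathbb{X}: J(x)=\{f\}\}$. $(x,y)$ is a parallel pair if $\|x+\lambda y\|=\|x\|+\|y\|$ for some $\lambda$ with $|\lambda|=1$; a TEA pair if $\|x+y\|=\|x\|+\|y\|$. $T$ preserves parallel pairs if $(x,y)$ parallel in $\mathbb{X}$ implies $(Tx,Ty)$ parallel in $\mathbb{Y}$. *)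

theory Defs
  imports "HOL-Analysis.Analysis"
begin

text \<open>A finite-dimensional real Banach space is modelled as a euclidean_space type
  (providing the underlying finite-dimensional real vector space) together with an
  arbitrary norm N on it. Linear functionals are represented via the inner product:
  the vector u stands for the functional x maps to u \<bullet> x.\<close>

definition is_norm :: "('a::real_vector \<Rightarrow> real) \<Rightarrow> bool" where
  "is_norm N \<longleftrightarrow> (\<forall>x. N x = 0 \<longleftrightarrow> x = 0) \<and>
     (\<forall>x y. N (x + y) \<le> N x + N y) \<and> (\<forall>c x. N (c *\<^sub>R x) = \<bar>c\<bar> * N x)"

definition unit_ball :: "('a::real_vector \<Rightarrow> real) \<Rightarrow> 'a set" where
  "unit_ball N = {x. N x \<le> 1}"

definition Ext :: "'a::real_vector set \<Rightarrow> 'a set" where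
  "Ext S = {x. x extreme_point_of S}"

definition polyhedral :: "('a::real_vector \<Rightarrow> real) \<Rightarrow> bool" where
  "polyhedral N \<longleftrightarrow> finite (Ext (unit_ball N))"

definition dual_norm :: "('a::euclidean_space \<Rightarrow> real) \<Rightarrow> 'a \<Rightarrow> real" where
  "dual_norm N u = (SUP x \<in> unit_ball N. \<bar>u \<bullet> x\<bar>)"

definition dual_ball :: "('a::euclidean_space \<Rightarrow> real) \<Rightarrow> 'a set" where
  "dual_ball N = {u. dual_norm N u \<le> 1}"

definition dual_sphere :: "('a::euclidean_space \<Rightarrow> real) \<Rightarrow> 'a set" where
  "dual_sphere N = {u. dual_norm N u = 1}"

definition J :: "('a::euclidean_space \<Rightarrow> real) \<Rightarrow> 'a \<Rightarrow> 'a set" where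
  "J N x = {f \<in> dual_sphere N. f \<bullet> x = N x}"

definition Sm :: "('a::euclidean_space \<Rightarrow> real) \<Rightarrow> 'a \<Rightarrow> 'a set" where
  "Sm N f = {x. J N x = {f}}"

definition parallel_pair :: "('a::real_vector \<Rightarrow> real) \<Rightarrow> 'a \<Rightarrow> 'a \<Rightarrow> bool" where
  "parallel_pair N x y \<longleftrightarrow> (\<exists>l::real. \<bar>l\<bar> = 1 \<and> N (x + l *\<^sub>R y) = N x + N y)"

definition preserves_parallel ::
  "('a::real_vector \<Rightarrow> real) \<Rightarrow> ('b::real_vector \<Rightarrow> real) \<Rightarrow> ('a \<Rightarrow> 'b) \<Rightarrow> bool" where
  "preserves_parallel NX NY T \<longleftrightarrow>
     (\<forall>x y. parallel_pair NX x y \<longrightarrow> parallel_pair NY (T x) (T y))"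

end

theory Submission
  imports Defs
begin

text \<open>For a polyhedral norm the dual ball has finitely many extreme points E. Every f in E
  has a smooth region, the set of points at which f is the only norming extreme functional; the
  smooth regions are nonempty, open, convex, pairwise disjoint, and their union is dense (its
  complement lies in finitely many hyperplanes). Two points of one smooth region form a parallel
  pair, so a parallel-preserving linear bijection T maps each smooth region, being connected,
  into a single smooth region. Density makes the induced map on extreme functionals surjective,
  equal cardinality makes it bijective, and then T maps smooth regions onto smooth regions.
  Finally f norms x exactly when x lies in the closure of the smooth region of f, so T transports
  the extreme norming functionals of x bijectively to those of T x.\<close>

lemma minus_eq_self_iff: "- (u::'a::real_vector) = u \<longleftrightarrow> u = 0"
proof
  assume "- u = u"
  then have "2 *\<^sub>R u = 0" by (metis add.left_inverse scaleR_2)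
  then show "u = 0" by simp
qed simp

lemma polyhedron_abs_inner_le:
  fixes v :: "'a::euclidean_space"
  shows "polyhedron {u. \<bar>u \<bullet> v\<bar> \<le> b}"
proof -
  have "{u. \<bar>u \<bullet> v\<bar> \<le> b} = {u. v \<bullet> u \<le> b} \<inter> {u. v \<bullet> u \<ge> - b}"
    by (auto simp: inner_commute abs_le_iff)
  then show ?thesis by (simp add: polyhedron_Int polyhedron_halfspace_le polyhedron_halfspace_ge)
qed

section \<open>Norms on euclidean spaces and their dual balls\<close>

locale finite_dim_norm =
  fixes N :: "'a::euclidean_space \<Rightarrow> real"
  assumes is_norm: "is_norm N"
begin

lemma N_eq_0_iff: "N x = 0 \<longleftrightarrow> x = 0"
  using is_norm by (simp add: is_norm_def)

lemma N_triangle: "N (x + y) \<le> N x + N y"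
  using is_norm by (simp add: is_norm_def)

lemma N_scaleR: "N (c *\<^sub>R x) = \<bar>c\<bar> * N x"
  using is_norm by (simp add: is_norm_def)

lemma N_0 [simp]: "N 0 = 0"
  using N_eq_0_iff by simp

lemma N_minus [simp]: "N (- x) = N x"
  using N_scaleR[of "-1" x] by simp

lemma N_nonneg: "0 \<le> N x"
  using N_triangle[of x "- x"] by simp

lemma N_pos: "x \<noteq> 0 \<Longrightarrow> 0 < N x"
  using N_nonneg[of x] N_eq_0_iff[of x] by linarith

lemma N_sgn: "N x = norm x * N (sgn x)"
  using N_scaleR[of "norm x" "sgn x"] by (cases "x = 0") (simp_all add: sgn_div_norm N_scaleR)

lemma continuous_on_N: "continuous_on UNIV N"
proof -
  have "convex_on UNIV N"
  proof (rule convex_onI)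
    fix t :: real and x y assume "0 < t" "t < 1"
    then show "N ((1 - t) *\<^sub>R x + t *\<^sub>R y) \<le> (1 - t) * N x + t * N y"
      using N_triangle[of "(1 - t) *\<^sub>R x" "t *\<^sub>R y"] N_scaleR[of "1 - t" x] N_scaleR[of t y]
      by simp
  qed simp
  then show ?thesis
    using convex_on_continuous[OF open_UNIV] by blast
qed

lemma N_equivalent_norm:
  obtains c C where "0 < c" "0 < C" "\<And>x. c * norm x \<le> N x" "\<And>x. N x \<le> C * norm x"
proof -
  obtain b :: 'a where "b \<in> Basis" using nonempty_Basis by blast
  then have sphere: "sphere (0::'a) 1 \<noteq> {}" by (auto intro!: exI[of _ b])
  have N_sphere: "continuous_on (sphere 0 1) N"
    using continuous_on_subset[OF continuous_on_N] by blast
  obtain a where a: "norm a = 1" "\<And>y. norm y = 1 \<Longrightarrow> N a \<le> N y"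
    using continuous_attains_inf[OF compact_sphere sphere N_sphere] by auto
  obtain z where z: "norm z = 1" "\<And>y. norm y = 1 \<Longrightarrow> N y \<le> N z"
    using continuous_attains_sup[OF compact_sphere sphere N_sphere] by auto
  have "N a * norm x \<le> N x \<and> N x \<le> N z * norm x" for x
    using a(2)[of "sgn x"] z(2)[of "sgn x"] N_sgn[of x]
    by (cases "x = 0") (simp_all add: norm_sgn mult.commute)
  moreover have "0 < N a" "0 < N z"
    using a(1) z(1) by (auto intro!: N_pos)
  ultimately show ?thesis using that by blast
qed

lemma convex_unit_ball: "convex (unit_ball N)"
  unfolding convex_def unit_ball_def
proof clarsimp
  fix x y :: 'a and u v :: real
  assume "N x \<le> 1" "N y \<le> 1" "0 \<le> u" "0 \<le> v" "u + v = 1"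
  then show "N (u *\<^sub>R x + v *\<^sub>R y) \<le> 1"
    using N_triangle[of "u *\<^sub>R x" "v *\<^sub>R y"] N_scaleR[of u x] N_scaleR[of v y]
    by (smt (verit) mult_left_le)
qed

lemma compact_unit_ball: "compact (unit_ball N)"
proof -
  obtain c where c: "0 < c" "\<And>x. c * norm x \<le> N x" by (meson N_equivalent_norm)
  have "norm x \<le> 1 / c" if "x \<in> unit_ball N" for x
    using that c(1) c(2)[of x] unfolding unit_ball_def by (simp add: field_simps)
  then have "bounded (unit_ball N)" unfolding bounded_iff by blast
  moreover have "closed (unit_ball N)"
    unfolding unit_ball_def by (rule closed_Collect_le[OF continuous_on_N continuous_on_const])
  ultimately show ?thesis using compact_eq_bounded_closed by blast
qed

lemma zero_in_interior_unit_ball: "0 \<in> interior (unit_ball N)"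
proof -
  obtain C where C: "0 < C" "\<And>x. N x \<le> C * norm x" by (meson N_equivalent_norm)
  have "N x \<le> 1" if "norm x < 1 / C" for x
    using that C(1) C(2)[of x] by (simp add: field_simps)
  then have "ball 0 (1 / C) \<subseteq> unit_ball N" unfolding unit_ball_def by auto
  then show ?thesis
    using C(1) by (meson centre_in_ball interior_maximal open_ball subsetD zero_less_divide_1_iff)
qed

lemma unit_ball_minus: "x \<in> unit_ball N \<Longrightarrow> - x \<in> unit_ball N"
  unfolding unit_ball_def by simp

lemma N_eq_1_notin_interior: "N p = 1 \<Longrightarrow> p \<notin> interior (unit_ball N)"
proof
  assume p: "N p = 1" "p \<in> interior (unit_ball N)"
  then obtain e where e: "e > 0" "ball p e \<subseteq> unit_ball N" using mem_interior by blast
  have "p \<noteq> 0" using p(1) by auto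
  define q where "q = (1 + e / (2 * norm p)) *\<^sub>R p"
  have "dist p q = e / 2" unfolding q_def dist_norm using \<open>p \<noteq> 0\<close> e(1)
    by (simp add: algebra_simps)
  then have "q \<in> ball p e" using e(1) by simp
  then have "N q \<le> 1" using e(2) unfolding unit_ball_def by blast
  moreover have "N q = 1 + e / (2 * norm p)"
    unfolding q_def using N_scaleR[of "1 + e / (2 * norm p)" p] p(1) e(1) by simp
  moreover have "e / (2 * norm p) > 0" using e(1) \<open>p \<noteq> 0\<close> by simp
  ultimately show False by simp
qed

lemma bdd_above_abs_inner_unit_ball: "bdd_above ((\<lambda>x. \<bar>u \<bullet> x\<bar>) ` unit_ball N)"
  by (intro bounded_imp_bdd_above compact_imp_bounded compact_continuous_image compact_unit_ball
      continuous_intros)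

lemma dual_ball_iff: "u \<in> dual_ball N \<longleftrightarrow> (\<forall>x\<in>unit_ball N. \<bar>u \<bullet> x\<bar> \<le> 1)"
  using cSUP_le_iff[OF _ bdd_above_abs_inner_unit_ball] unfolding dual_ball_def dual_norm_def
  by (metis empty_iff mem_Collect_eq unit_ball_def N_0 zero_le_one)

lemma abs_inner_le_dual_norm: "\<bar>u \<bullet> x\<bar> \<le> dual_norm N u * N x"
proof (cases "x = 0")
  case False
  then have Nx: "N x > 0" using N_pos by blast
  have "(1 / N x) *\<^sub>R x \<in> unit_ball N"
    unfolding unit_ball_def using N_scaleR[of "1 / N x" x] Nx by simp
  then have "\<bar>u \<bullet> ((1 / N x) *\<^sub>R x)\<bar> \<le> dual_norm N u"
    unfolding dual_norm_def using cSUP_upper[OF _ bdd_above_abs_inner_unit_ball] by blast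
  then show ?thesis using Nx by (simp add: abs_mult field_simps)
qed simp

lemma inner_le_N: "u \<in> dual_ball N \<Longrightarrow> u \<bullet> x \<le> N x"
  using abs_inner_le_dual_norm[of u x] mult_right_mono[OF _ N_nonneg, of "dual_norm N u" 1 x]
  unfolding dual_ball_def by simp

lemma dual_ball_minus: "u \<in> dual_ball N \<Longrightarrow> - u \<in> dual_ball N"
  using dual_ball_iff by auto

lemma dual_ball_eq_Inter: "dual_ball N = (\<Inter>x\<in>unit_ball N. {u. \<bar>u \<bullet> x\<bar> \<le> 1})"
  using dual_ball_iff by blast

lemma convex_dual_ball: "convex (dual_ball N)"
  unfolding dual_ball_eq_Inter
  by (intro convex_INT ballI) (subst inner_commute, rule convex_halfspace_abs_le)

lemma compact_dual_ball: "compact (dual_ball N)"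
proof -
  obtain C where C: "0 < C" "\<And>x. N x \<le> C * norm x" by (meson N_equivalent_norm)
  have "norm u \<le> C" if "u \<in> dual_ball N" for u
  proof -
    have "norm u * norm u \<le> dual_norm N u * N u"
      using abs_inner_le_dual_norm[of u u] by (simp add: dot_square_norm power2_eq_square)
    also have "\<dots> \<le> N u"
      using that mult_right_mono[OF _ N_nonneg, of "dual_norm N u" 1 u] unfolding dual_ball_def
      by simp
    also have "\<dots> \<le> C * norm u"
      using C(2) .
    finally show ?thesis by (cases "u = 0") (use C(1) in auto)
  qed
  then have "bounded (dual_ball N)" unfolding bounded_iff by blast
  moreover have "closed (dual_ball N)"
    unfolding dual_ball_eq_Inter
    by (intro closed_INT ballI closed_Collect_le continuous_intros)
  ultimately show ?thesis using compact_eq_bounded_closed by blast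
qed

text \<open>Hahn--Banach: a supporting hyperplane of the unit ball at x / N x.\<close>

lemma exists_norming_functional: "\<exists>u\<in>dual_ball N. u \<bullet> x = N x"
proof (cases "x = 0")
  case True
  moreover have "0 \<in> dual_ball N" by (simp add: dual_ball_iff)
  ultimately show ?thesis by auto
next
  case False
  have Nx: "N x > 0" using N_pos[OF False] .
  define p where "p = (1 / N x) *\<^sub>R x"
  have p: "N p = 1" unfolding p_def using N_scaleR[of "1 / N x" x] Nx by simp
  have "closure (unit_ball N) = unit_ball N" "rel_interior (unit_ball N) = interior (unit_ball N)"
    using compact_unit_ball zero_in_interior_unit_ball rel_interior_nonempty_interior
    by (auto simp: compact_imp_closed)
  moreover have "p \<in> unit_ball N" using p unfolding unit_ball_def by simp
  ultimately obtain a where a: "\<And>y. y \<in> unit_ball N \<Longrightarrow> a \<bullet> p \<le> a \<bullet> y"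
      "\<And>y. y \<in> interior (unit_ball N) \<Longrightarrow> a \<bullet> p < a \<bullet> y"
    using supporting_hyperplane_relative_frontier[OF convex_unit_ball, of p]
      N_eq_1_notin_interior[OF p] by metis
  have ap: "a \<bullet> p < 0" using a(2)[OF zero_in_interior_unit_ball] by simp
  define u where "u = (1 / (a \<bullet> p)) *\<^sub>R a"
  have "\<bar>u \<bullet> y\<bar> \<le> 1" if "y \<in> unit_ball N" for y
    using a(1)[OF that] a(1)[OF unit_ball_minus[OF that]] ap
    unfolding u_def by (simp add: abs_le_iff field_simps)
  then have "u \<in> dual_ball N" using dual_ball_iff by blast
  moreover have "u \<bullet> x = N x"
    using ap Nx unfolding u_def p_def by (simp add: field_simps)
  ultimately show ?thesis by blast
qed

abbreviation E :: "'a set" where "E \<equiv> Ext (dual_ball N)"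

lemma E_subset_dual_ball: "E \<subseteq> dual_ball N"
  unfolding Ext_def extreme_point_of_def by auto

lemma E_inner_le: "f \<in> E \<Longrightarrow> f \<bullet> x \<le> N x"
  using E_subset_dual_ball inner_le_N by blast

lemma face_of_dual_ball_norming: "(dual_ball N \<inter> {u. x \<bullet> u = N x}) face_of dual_ball N"
  by (rule face_of_Int_supporting_hyperplane_le[OF convex_dual_ball])
    (simp add: inner_le_N inner_commute)

lemma exists_E_norming: "\<exists>f\<in>E. f \<bullet> x = N x"
proof -
  let ?F = "dual_ball N \<inter> {u. x \<bullet> u = N x}"
  have "?F \<noteq> {}" using exists_norming_functional[of x] by (auto simp: inner_commute)
  moreover have "?F = convex hull {u. u extreme_point_of ?F}"
    by (intro Krein_Milman_Minkowski compact_Int_closed convex_Int compact_dual_ball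
        convex_dual_ball closed_hyperplane convex_hyperplane)
  ultimately obtain f where "f extreme_point_of ?F" by fastforce
  then have "f extreme_point_of dual_ball N" "f \<in> ?F"
    using extreme_point_of_face[OF face_of_dual_ball_norming] by blast+
  then show ?thesis unfolding Ext_def by (auto simp: inner_commute)
qed

lemma E_minus:
  assumes "f \<in> E"
  shows "- f \<in> E"
  unfolding Ext_def mem_Collect_eq extreme_point_of_def
proof (intro conjI ballI notI)
  show "- f \<in> dual_ball N"
    using assms E_subset_dual_ball dual_ball_minus by blast
next
  fix a b assume ab: "a \<in> dual_ball N" "b \<in> dual_ball N" "- f \<in> open_segment a b"
  then have "f \<in> open_segment (- a) (- b)"
    by (auto simp: in_segment algebra_simps)
  then show False
    using assms dual_ball_minus[OF ab(1)] dual_ball_minus[OF ab(2)]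
    unfolding Ext_def extreme_point_of_def by blast
qed

lemma zero_notin_E: "0 \<notin> E"
proof
  assume "0 \<in> E"
  obtain b :: 'a where "b \<in> Basis" using nonempty_Basis by blast
  obtain u where u: "u \<in> dual_ball N" "u \<bullet> b = N b" using exists_norming_functional by blast
  moreover have "b \<noteq> 0" using \<open>b \<in> Basis\<close> by auto
  ultimately have "u \<noteq> 0" using N_pos by force
  then have "u \<noteq> - u" using minus_eq_self_iff by metis
  then have "0 \<in> open_segment u (- u)"
    by (auto simp: in_segment intro!: exI[of _ "1/2"])
  then show False
    using \<open>0 \<in> E\<close> u(1) dual_ball_minus unfolding Ext_def extreme_point_of_def by blast
qed

text \<open>For x \<noteq> 0 this is Ext J(x) (see Ext_J_eq), but at x = 0 it is all of E.\<close>

definition norming_Ext :: "'a \<Rightarrow> 'a set" where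
  "norming_Ext x = {f \<in> E. f \<bullet> x = N x}"

definition smooth_region :: "'a \<Rightarrow> 'a set" where
  "smooth_region f = {x. norming_Ext x = {f}}"

lemma norming_Ext_nonempty: "norming_Ext x \<noteq> {}"
  unfolding norming_Ext_def using exists_E_norming by blast

lemma norming_Ext_subset: "norming_Ext x \<subseteq> E"
  unfolding norming_Ext_def by blast

lemma minus_notin_norming_Ext: "x \<noteq> 0 \<Longrightarrow> f \<in> norming_Ext x \<Longrightarrow> - f \<notin> norming_Ext x"
  using N_pos[of x] unfolding norming_Ext_def by auto

lemma smooth_region_disjoint: "f \<noteq> g \<Longrightarrow> smooth_region f \<inter> smooth_region g = {}"
  unfolding smooth_region_def by auto

lemma zero_notin_smooth_region:
  assumes "f \<in> E"
  shows "0 \<notin> smooth_region f"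
proof
  assume "0 \<in> smooth_region f"
  then have "E = {f}" unfolding smooth_region_def norming_Ext_def by simp
  then have "- f = f" using E_minus[OF assms] by blast
  then show False using assms zero_notin_E minus_eq_self_iff by metis
qed

lemma smooth_region_iff:
  assumes "f \<in> E"
  shows "x \<in> smooth_region f \<longleftrightarrow> (\<forall>g\<in>E - {f}. g \<bullet> x < f \<bullet> x)"
proof
  assume "x \<in> smooth_region f"
  then have "norming_Ext x = {f}" unfolding smooth_region_def by simp
  then have "f \<bullet> x = N x" "\<And>g. g \<in> E - {f} \<Longrightarrow> g \<bullet> x \<noteq> N x"
    unfolding norming_Ext_def by auto
  then show "\<forall>g\<in>E - {f}. g \<bullet> x < f \<bullet> x"
    using E_inner_le by (metis DiffE le_less)
next
  assume less: "\<forall>g\<in>E - {f}. g \<bullet> x < f \<bullet> x"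
  obtain h where h: "h \<in> E" "h \<bullet> x = N x" using exists_E_norming by blast
  have "h = f"
  proof (rule ccontr)
    assume "h \<noteq> f"
    then have "h \<bullet> x < f \<bullet> x" using less h(1) by blast
    then show False using h(2) E_inner_le[OF assms, of x] by simp
  qed
  have "g = f" if "g \<in> E" "g \<bullet> x = N x" for g
    using that less h(2) \<open>h = f\<close> by (metis DiffI less_irrefl singletonD)
  then have "norming_Ext x = {f}"
    using h \<open>h = f\<close> unfolding norming_Ext_def by blast
  then show "x \<in> smooth_region f" unfolding smooth_region_def by simp
qed

lemma convex_smooth_region: "f \<in> E \<Longrightarrow> convex (smooth_region f)"
proof -
  assume f: "f \<in> E"
  have "smooth_region f = (\<Inter>g\<in>E - {f}. {x. (g - f) \<bullet> x < 0})"
    using smooth_region_iff[OF f] by (auto simp: inner_diff_left)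
  then show ?thesis by (simp add: convex_INT convex_halfspace_lt)
qed

lemma closure_smooth_region_subset: "closure (smooth_region f) \<subseteq> {x. f \<bullet> x = N x}"
proof (rule closure_minimal)
  show "smooth_region f \<subseteq> {x. f \<bullet> x = N x}"
    unfolding smooth_region_def norming_Ext_def by auto
  show "closed {x. f \<bullet> x = N x}"
    by (rule closed_Collect_eq[OF _ continuous_on_N]) (intro continuous_intros)
qed

lemma parallel_pair_if_common_norming:
  assumes "f \<in> norming_Ext x" "f \<in> norming_Ext y"
  shows "parallel_pair N x y"
proof -
  have "N x + N y \<le> N (x + y)"
    using assms E_inner_le[of f "x + y"] unfolding norming_Ext_def by (simp add: inner_add_right)
  then show ?thesis
    unfolding parallel_pair_def using N_triangle[of x y] by (intro exI[of _ 1]) simp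
qed

lemma parallel_pair_imp_norming:
  assumes "parallel_pair N x y"
  shows "\<exists>f\<in>norming_Ext x. f \<in> norming_Ext y \<or> - f \<in> norming_Ext y"
proof -
  obtain l :: real where "\<bar>l\<bar> = 1" and l: "N (x + l *\<^sub>R y) = N x + N y"
    using assms unfolding parallel_pair_def by blast
  then have l_cases: "l = 1 \<or> l = -1" by auto
  obtain f where f: "f \<in> E" "f \<bullet> (x + l *\<^sub>R y) = N (x + l *\<^sub>R y)"
    using exists_E_norming by blast
  have "f \<bullet> x \<le> N x" "l * (f \<bullet> y) \<le> N y"
    using l_cases E_inner_le[OF f(1)] E_inner_le[OF E_minus[OF f(1)]] by auto
  moreover have "f \<bullet> x + l * (f \<bullet> y) = N x + N y"
    using f(2) l by (simp add: inner_add_right)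
  ultimately have "f \<bullet> x = N x" "l * (f \<bullet> y) = N y" by linarith+
  then show ?thesis using l_cases f(1) E_minus[OF f(1)] unfolding norming_Ext_def by auto
qed

lemma J_eq:
  assumes "x \<noteq> 0"
  shows "J N x = dual_ball N \<inter> {u. x \<bullet> u = N x}"
proof -
  have "1 \<le> dual_norm N u" if "u \<bullet> x = N x" for u
    using abs_inner_le_dual_norm[of u x] that N_pos[OF assms] by simp
  then show ?thesis
    unfolding J_def dual_sphere_def dual_ball_def by (auto simp: inner_commute intro: order.antisym)
qed

lemma Ext_J_eq:
  assumes "x \<noteq> 0"
  shows "Ext (J N x) = norming_Ext x"
proof -
  have "v extreme_point_of J N x \<longleftrightarrow> v extreme_point_of dual_ball N \<and> x \<bullet> v = N x" for v
    unfolding J_eq[OF assms] extreme_point_of_face[OF face_of_dual_ball_norming]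
    by (auto simp: extreme_point_of_def)
  then show ?thesis unfolding Ext_def norming_Ext_def by (auto simp: inner_commute)
qed

lemma Sm_eq_smooth_region:
  assumes "f \<in> E"
  shows "Sm N f = smooth_region f"
proof -
  have "J N x = {f} \<longleftrightarrow> norming_Ext x = {f}" for x
  proof (cases "x = 0")
    case True
    have "f \<in> dual_sphere N \<Longrightarrow> - f \<in> dual_sphere N"
      unfolding dual_sphere_def dual_norm_def by simp
    moreover have "f \<noteq> 0" using assms zero_notin_E by blast
    ultimately have "J N 0 \<noteq> {f}"
      unfolding J_def by (auto simp: minus_eq_self_iff)
    then show ?thesis
      using True zero_notin_smooth_region[OF assms] unfolding smooth_region_def by simp
  next
    case False
    have "J N x = convex hull (Ext (J N x))"
      unfolding J_eq[OF False] Ext_def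
      by (intro Krein_Milman_Minkowski compact_Int_closed convex_Int compact_dual_ball
          convex_dual_ball closed_hyperplane convex_hyperplane)
    moreover have "Ext {f} = {f}"
      unfolding Ext_def extreme_point_of_def by auto
    ultimately show ?thesis using Ext_J_eq[OF False] by auto
  qed
  then show ?thesis unfolding Sm_def smooth_region_def by simp
qed

end

section \<open>Polyhedral norms\<close>

locale polyhedral_norm = finite_dim_norm +
  assumes polyhedral: "polyhedral N"
begin

lemma dual_ball_eq_Inter_Ext: "dual_ball N = (\<Inter>v\<in>Ext (unit_ball N). {u. \<bar>u \<bullet> v\<bar> \<le> 1})"
proof -
  define V where "V = Ext (unit_ball N)"
  have hull: "unit_ball N = convex hull V"
    unfolding V_def Ext_def by (rule Krein_Milman_Minkowski[OF compact_unit_ball convex_unit_ball])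
  have "u \<in> dual_ball N \<longleftrightarrow> V \<subseteq> {x. \<bar>u \<bullet> x\<bar> \<le> 1}" for u
  proof -
    have "u \<in> dual_ball N \<longleftrightarrow> convex hull V \<subseteq> {x. \<bar>u \<bullet> x\<bar> \<le> 1}"
      unfolding dual_ball_iff hull[symmetric] by blast
    also have "\<dots> \<longleftrightarrow> V \<subseteq> {x. \<bar>u \<bullet> x\<bar> \<le> 1}"
      by (rule subset_hull[of convex, OF convex_halfspace_abs_le])
    finally show ?thesis .
  qed
  then show ?thesis unfolding V_def by blast
qed

lemma polyhedron_dual_ball: "polyhedron (dual_ball N)"
  unfolding dual_ball_eq_Inter_Ext
  using polyhedral unfolding polyhedral_def
  by (intro polyhedron_Inter) (auto intro: polyhedron_abs_inner_le)

lemma finite_E: "finite E"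
  unfolding Ext_def by (rule finite_polyhedron_extreme_points[OF polyhedron_dual_ball])

lemma open_smooth_region: "f \<in> E \<Longrightarrow> open (smooth_region f)"
proof -
  assume f: "f \<in> E"
  have "smooth_region f = (\<Inter>g\<in>E - {f}. {x. g \<bullet> x < f \<bullet> x})"
    using smooth_region_iff[OF f] by blast
  then show ?thesis
    using finite_E by (auto intro!: open_INT open_Collect_less continuous_intros)
qed

text \<open>Extreme points of a polytope are exposed; a vector exposing f lies in the smooth
  region of f.\<close>

lemma smooth_region_nonempty: "f \<in> E \<Longrightarrow> smooth_region f \<noteq> {}"
proof -
  assume f: "f \<in> E"
  then have "{f} exposed_face_of dual_ball N"
    using exposed_face_of_polyhedron[OF polyhedron_dual_ball] face_of_singleton
    unfolding Ext_def by blast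
  then obtain a b where ab: "dual_ball N \<subseteq> {u. a \<bullet> u \<le> b}" "{f} = dual_ball N \<inter> {u. a \<bullet> u = b}"
    unfolding exposed_face_of_def by blast
  obtain u where "u \<in> dual_ball N" "u \<bullet> a = N a"
    using exists_norming_functional by blast
  then have "N a \<le> b" using ab(1) by (auto simp: inner_commute)
  moreover have "f \<bullet> a = b" using ab(2) by (auto simp: inner_commute)
  ultimately have "N a = b" using E_inner_le[OF f, of a] by simp
  then have "norming_Ext a = {f}"
    using ab(2) E_subset_dual_ball f unfolding norming_Ext_def by (auto simp: inner_commute)
  then show ?thesis unfolding smooth_region_def by blast
qed

lemma norming_Ext_iff_closure_smooth_region:
  assumes f: "f \<in> E"
  shows "f \<in> norming_Ext x \<longleftrightarrow> x \<in> closure (smooth_region f)"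
proof
  assume "f \<in> norming_Ext x"
  then have fx: "f \<bullet> x = N x" unfolding norming_Ext_def by simp
  obtain w where w: "w \<in> smooth_region f" using smooth_region_nonempty[OF f] by blast
  have "x + t *\<^sub>R w \<in> smooth_region f" if "t > 0" for t
    unfolding smooth_region_iff[OF f]
  proof
    fix g assume g: "g \<in> E - {f}"
    have "g \<bullet> x \<le> f \<bullet> x" using E_inner_le[of g x] g fx by auto
    moreover have "g \<bullet> w < f \<bullet> w" using w g smooth_region_iff[OF f] by blast
    ultimately show "g \<bullet> (x + t *\<^sub>R w) < f \<bullet> (x + t *\<^sub>R w)"
      using \<open>t > 0\<close> by (simp add: inner_add_right add_le_less_mono)
  qed
  moreover have "(\<lambda>n. x + inverse (Suc n) *\<^sub>R w) \<longlonglongrightarrow> x"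
    using tendsto_add[OF tendsto_const tendsto_scaleR[OF LIMSEQ_inverse_real_of_nat tendsto_const]]
    by simp
  ultimately show "x \<in> closure (smooth_region f)"
    unfolding closure_sequential by (intro exI[of _ "\<lambda>n. x + inverse (Suc n) *\<^sub>R w"]) auto
next
  assume "x \<in> closure (smooth_region f)"
  then show "f \<in> norming_Ext x"
    using closure_smooth_region_subset f unfolding norming_Ext_def by blast
qed

text \<open>A point outside every smooth region is normed by two distinct extreme functionals f, g,
  so it lies on the hyperplane {x. (f - g) \<bullet> x = 0}; finitely many hyperplanes are negligible.\<close>

lemma smooth_regions_dense:
  assumes "open U" "U \<noteq> {}"
  shows "\<exists>f\<in>E. U \<inter> smooth_region f \<noteq> {}"
proof (rule ccontr)
  assume none: "\<not> (\<exists>f\<in>E. U \<inter> smooth_region f \<noteq> {})"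
  have "U \<subseteq> (\<Union>(f, g)\<in>E \<times> E - Id. {x. (f - g) \<bullet> x = 0})"
  proof
    fix x assume x: "x \<in> U"
    obtain f where f: "f \<in> norming_Ext x" using norming_Ext_nonempty by blast
    then have "x \<notin> smooth_region f" using none x norming_Ext_subset by blast
    then obtain g where "g \<in> norming_Ext x" "g \<noteq> f"
      using f unfolding smooth_region_def by blast
    with f have "(f, g) \<in> E \<times> E - Id" "(f - g) \<bullet> x = 0"
      unfolding norming_Ext_def by (auto simp: inner_diff_left)
    then show "x \<in> (\<Union>(f, g)\<in>E \<times> E - Id. {x. (f - g) \<bullet> x = 0})" by blast
  qed
  moreover have "negligible (\<Union>(f, g)\<in>E \<times> E - Id. {x. (f - g) \<bullet> x = 0})"
    using finite_E by (intro negligible_Union) (auto intro!: negligible_hyperplane)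
  ultimately show False
    using open_not_negligible assms negligible_subset by blast
qed

end

section \<open>Linear bijections preserving parallel pairs\<close>

locale parallel_preserving_iso =
  X: polyhedral_norm NX + Y: polyhedral_norm NY
  for NX :: "'a::euclidean_space \<Rightarrow> real" and NY :: "'b::euclidean_space \<Rightarrow> real" +
  fixes T :: "'a \<Rightarrow> 'b"
  assumes linear_T: "linear T" and bij_T: "bij T"
    and preserves_parallel_T: "preserves_parallel NX NY T"
begin

lemma T_eq_0_iff: "T x = 0 \<longleftrightarrow> x = 0"
  using linear_injective_0[OF linear_T] bij_is_inj[OF bij_T] linear_0[OF linear_T] by blast

lemma open_image_T: "open U \<Longrightarrow> open (T ` U)"
  using open_bijective_linear_image_eq[OF linear_T bij_T] by blast

lemma open_vimage_T: "open U \<Longrightarrow> open (T -` U)"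
  using continuous_open_vimage linear_continuous_at linear_conv_bounded_linear linear_T by blast

lemma closure_image_T: "closure (T ` S) = T ` closure S"
  using closure_injective_linear_image[OF linear_T bij_is_inj[OF bij_T]] by simp

text \<open>Any two points of a smooth region form a parallel pair, and so do their images.
  As T maps the smooth region onto an open neighbourhood of T x, each functional norming T x is
  the only norming functional at the image of some such point; by parallelness two of these
  functionals agree up to sign, and the sign is fixed since both norm T x \<noteq> 0.\<close>

lemma image_smooth_point:
  assumes f: "f \<in> X.E" and x: "x \<in> X.smooth_region f"
  shows "\<exists>g\<in>Y.E. T x \<in> Y.smooth_region g"
proof -
  let ?S = "X.smooth_region f"
  have meets: "\<exists>x'\<in>?S. T x' \<in> Y.smooth_region h" if "h \<in> Y.norming_Ext (T x)" for h
  proof -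
    have "T x \<in> closure (Y.smooth_region h)"
      using that Y.norming_Ext_iff_closure_smooth_region Y.norming_Ext_subset by blast
    then have "T ` ?S \<inter> Y.smooth_region h \<noteq> {}"
      using x open_Int_closure_eq_empty[OF open_image_T[OF X.open_smooth_region[OF f]]] by blast
    then show ?thesis by blast
  qed
  have "T x \<noteq> 0" using x X.zero_notin_smooth_region[OF f] T_eq_0_iff by metis
  obtain h1 where h1: "h1 \<in> Y.norming_Ext (T x)" using Y.norming_Ext_nonempty by blast
  have "h2 = h1" if h2: "h2 \<in> Y.norming_Ext (T x)" for h2
  proof -
    obtain x1 x2 where "x1 \<in> ?S" "x2 \<in> ?S"
      and Tx: "Y.norming_Ext (T x1) = {h1}" "Y.norming_Ext (T x2) = {h2}"
      using meets[OF h1] meets[OF h2] unfolding Y.smooth_region_def by blast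
    then have "parallel_pair NX x1 x2"
      using X.parallel_pair_if_common_norming[of f] unfolding X.smooth_region_def by blast
    then have "parallel_pair NY (T x1) (T x2)"
      using preserves_parallel_T unfolding preserves_parallel_def by blast
    then obtain k where "k \<in> Y.norming_Ext (T x1)"
        "k \<in> Y.norming_Ext (T x2) \<or> - k \<in> Y.norming_Ext (T x2)"
      using Y.parallel_pair_imp_norming by blast
    then have "h2 = h1 \<or> h2 = - h1" using Tx by auto
    then show ?thesis using Y.minus_notin_norming_Ext[OF \<open>T x \<noteq> 0\<close> h1] h2 by blast
  qed
  then have "Y.norming_Ext (T x) = {h1}" using h1 by blast
  then show ?thesis using h1 Y.norming_Ext_subset unfolding Y.smooth_region_def by blast
qed

lemma image_smooth_region_subset:
  assumes f: "f \<in> X.E"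
  shows "\<exists>g\<in>Y.E. T ` X.smooth_region f \<subseteq> Y.smooth_region g"
proof -
  let ?S = "X.smooth_region f"
  obtain x0 where x0: "x0 \<in> ?S" using X.smooth_region_nonempty[OF f] by blast
  obtain g where g: "g \<in> Y.E" "T x0 \<in> Y.smooth_region g"
    using image_smooth_point[OF f x0] by blast
  let ?V = "\<Union>h\<in>Y.E - {g}. Y.smooth_region h"
  have "connected (T ` ?S)"
    using connected_linear_image[OF linear_T convex_connected[OF X.convex_smooth_region[OF f]]] .
  moreover have "T ` ?S \<subseteq> Y.smooth_region g \<union> ?V"
    using image_smooth_point[OF f] by blast
  moreover have "Y.smooth_region g \<inter> ?V \<inter> T ` ?S = {}"
    using Y.smooth_region_disjoint by blast
  ultimately have "Y.smooth_region g \<inter> T ` ?S = {} \<or> ?V \<inter> T ` ?S = {}"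
    using connectedD Y.open_smooth_region g(1) by (metis DiffD1 open_UN)
  then have "T ` ?S \<subseteq> Y.smooth_region g"
    using \<open>T ` ?S \<subseteq> Y.smooth_region g \<union> ?V\<close> x0 g(2) by blast
  then show ?thesis using g(1) by blast
qed

definition ext_map :: "'a \<Rightarrow> 'b" where
  "ext_map f = (SOME g. g \<in> Y.E \<and> T ` X.smooth_region f \<subseteq> Y.smooth_region g)"

lemma ext_map:
  assumes "f \<in> X.E"
  shows "ext_map f \<in> Y.E" "T ` X.smooth_region f \<subseteq> Y.smooth_region (ext_map f)"
  using someI_ex[OF image_smooth_region_subset[OF assms, unfolded Bex_def]]
  unfolding ext_map_def by blast+

lemma ext_map_image: "ext_map ` X.E = Y.E"
proof
  show "ext_map ` X.E \<subseteq> Y.E" using ext_map(1) by blast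
next
  show "Y.E \<subseteq> ext_map ` X.E"
  proof
    fix g assume g: "g \<in> Y.E"
    obtain y where "y \<in> Y.smooth_region g" using Y.smooth_region_nonempty[OF g] by blast
    moreover obtain x where "y = T x" using bij_is_surj[OF bij_T] by (metis surjD)
    ultimately have "T -` Y.smooth_region g \<noteq> {}" by blast
    then obtain f where "f \<in> X.E" "T -` Y.smooth_region g \<inter> X.smooth_region f \<noteq> {}"
      using X.smooth_regions_dense[OF open_vimage_T[OF Y.open_smooth_region[OF g]]] by blast
    then obtain x where f: "f \<in> X.E" "x \<in> X.smooth_region f" "T x \<in> Y.smooth_region g"
      by blast
    then have "T x \<in> Y.smooth_region (ext_map f)" using ext_map(2) by blast
    then have "g = ext_map f" using f(3) Y.smooth_region_disjoint by blast
    then show "g \<in> ext_map ` X.E" using f(1) by blast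
  qed
qed

lemma ext_map_norming:
  assumes "f \<in> X.norming_Ext x"
  shows "ext_map f \<in> Y.norming_Ext (T x)"
proof -
  have f: "f \<in> X.E" using assms X.norming_Ext_subset by blast
  have "T x \<in> T ` closure (X.smooth_region f)"
    using assms X.norming_Ext_iff_closure_smooth_region[OF f] by blast
  also have "\<dots> = closure (T ` X.smooth_region f)" by (simp add: closure_image_T)
  also have "\<dots> \<subseteq> closure (Y.smooth_region (ext_map f))"
    using closure_mono[OF ext_map(2)[OF f]] .
  finally show ?thesis
    using Y.norming_Ext_iff_closure_smooth_region[OF ext_map(1)[OF f]] by blast
qed

end

text \<open>Only here is the cardinality hypothesis needed: it makes the surjection ext_map
  injective.\<close>

locale parallel_preserving_iso_eq_card = parallel_preserving_iso +
  assumes card_E_eq: "card X.E = card Y.E"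
begin

lemma inj_on_ext_map: "inj_on ext_map X.E"
  by (rule eq_card_imp_inj_on[OF X.finite_E]) (simp add: ext_map_image card_E_eq)

lemma image_smooth_region:
  assumes f: "f \<in> X.E"
  shows "T ` X.smooth_region f = Y.smooth_region (ext_map f)"
proof
  show "T ` X.smooth_region f \<subseteq> Y.smooth_region (ext_map f)" using ext_map(2)[OF f] .
next
  show "Y.smooth_region (ext_map f) \<subseteq> T ` X.smooth_region f"
  proof
    fix y assume y: "y \<in> Y.smooth_region (ext_map f)"
    obtain x where x: "y = T x" using bij_is_surj[OF bij_T] by blast
    have "f' = f" if "f' \<in> X.norming_Ext x" for f'
    proof -
      have "ext_map f' = ext_map f"
        using ext_map_norming[OF that] y x unfolding Y.smooth_region_def by blast
      then show ?thesis using inj_onD[OF inj_on_ext_map] that f X.norming_Ext_subset by blast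
    qed
    then have "X.norming_Ext x = {f}" using X.norming_Ext_nonempty by blast
    then show "y \<in> T ` X.smooth_region f" using x unfolding X.smooth_region_def by blast
  qed
qed

lemma norming_Ext_image: "Y.norming_Ext (T x) = ext_map ` X.norming_Ext x"
proof
  show "ext_map ` X.norming_Ext x \<subseteq> Y.norming_Ext (T x)" using ext_map_norming by blast
next
  show "Y.norming_Ext (T x) \<subseteq> ext_map ` X.norming_Ext x"
  proof
    fix h assume h: "h \<in> Y.norming_Ext (T x)"
    then obtain f where f: "f \<in> X.E" "h = ext_map f"
      using ext_map_image Y.norming_Ext_subset by blast
    then have "T x \<in> T ` closure (X.smooth_region f)"
      using h Y.norming_Ext_iff_closure_smooth_region[OF ext_map(1)[OF f(1)]]
      by (simp add: image_smooth_region[OF f(1), symmetric] closure_image_T)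
    then have "x \<in> closure (X.smooth_region f)"
      using bij_is_inj[OF bij_T] by (simp add: inj_image_mem_iff)
    then show "h \<in> ext_map ` X.norming_Ext x"
      using f X.norming_Ext_iff_closure_smooth_region by blast
  qed
qed

lemma ex1_image_Sm:
  assumes f: "f \<in> Ext (dual_ball NX)"
  shows "\<exists>!g. g \<in> Ext (dual_ball NY) \<and> T ` Sm NX f = Sm NY g"
proof (rule ex1I[of _ "ext_map f"])
  have image_Sm: "T ` Sm NX f = Y.smooth_region (ext_map f)"
    unfolding X.Sm_eq_smooth_region[OF f] by (rule image_smooth_region[OF f])
  then show "ext_map f \<in> Y.E \<and> T ` Sm NX f = Sm NY (ext_map f)"
    using ext_map(1)[OF f] Y.Sm_eq_smooth_region[OF ext_map(1)[OF f]] by simp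
  fix g assume g: "g \<in> Y.E \<and> T ` Sm NX f = Sm NY g"
  then have "Y.smooth_region g = Sm NY g"
    using Y.Sm_eq_smooth_region by simp
  also have "\<dots> = Y.smooth_region (ext_map f)"
    using g image_Sm by simp
  finally show "g = ext_map f"
    using Y.smooth_region_nonempty[of g] Y.smooth_region_disjoint[of g "ext_map f"] g by blast
qed

lemma card_Ext_J_image:
  assumes "x \<noteq> 0"
  shows "card (Ext (J NX x)) = card (Ext (J NY (T x)))"
proof -
  have "T x \<noteq> 0" using assms T_eq_0_iff by blast
  then have "card (Ext (J NY (T x))) = card (ext_map ` X.norming_Ext x)"
    by (simp add: Y.Ext_J_eq norming_Ext_image)
  also have "\<dots> = card (X.norming_Ext x)"
    by (rule card_image[OF inj_on_subset[OF inj_on_ext_map X.norming_Ext_subset]])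
  also have "\<dots> = card (Ext (J NX x))"
    using assms by (simp add: X.Ext_J_eq)
  finally show ?thesis by simp
qed

end

theorem mainTheorem17:
  fixes NX :: "'a::euclidean_space \<Rightarrow> real"
    and NY :: "'b::euclidean_space \<Rightarrow> real"
    and T :: "'a \<Rightarrow> 'b"
  assumes "is_norm NX" and "is_norm NY"
    and "DIM('a) = DIM('b)"
    and "polyhedral NX" and "polyhedral NY"
    and "card (Ext (dual_ball NX)) = card (Ext (dual_ball NY))"
    and "linear T" and "bij T"
    and "preserves_parallel NX NY T"
  shows "(\<forall>f \<in> Ext (dual_ball NX). \<exists>!g. g \<in> Ext (dual_ball NY) \<and> T ` Sm NX f = Sm NY g)
       \<and> (\<forall>x. x \<noteq> 0 \<longrightarrow> card (Ext (J NX x)) = card (Ext (J NY (T x))))"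
proof -
  interpret parallel_preserving_iso_eq_card NX NY T
    by (intro parallel_preserving_iso_eq_card.intro parallel_preserving_iso.intro
        parallel_preserving_iso_axioms.intro parallel_preserving_iso_eq_card_axioms.intro
        polyhedral_norm.intro polyhedral_norm_axioms.intro finite_dim_norm.intro assms)
  show ?thesis using ex1_image_Sm card_Ext_J_image by blast
qed

end
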